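(* Let $L,R$ be nonempty subsets of a group $G$ and $s\in G$. In $2\mathrm{S}(G;L,R)$, if $g=w_{\bar{L},m,a}\,s\,w_{\bar{R},n,b}$ for integers $m,a,n,b\ge0$, then for every $l\in L$ and $r\in R$ we have $g\sim l^ds$ and $g\sim sr^d$, where $d=m+n-(a+b)$.
   Context: For nonempty subsets $L,R$ of a group $G$, the two-sided group digraph $2\mathrm{S}(G;L,R)$ has vertex set $G$ and a directed arc $(g,h)$ if and only if $h=l^{-1}gr$ for some $l\in L$, $r\in R$. Write $\bar{L}=L\cup L^{-1}$, $\bar{R}=R\cup R^{-1}$. The notation $w_{\bar{L},m,a}$ denotes the value of a word (finite product, empty product $=e$) with $m$ factors from $L$ and $a$ factors from $L^{-1}$ in some order; similarly $w_{\bar{R},n,b}$ has $n$ factors from $R$ and $b$ from $R^{-1}$. $g\sim h$ means $g$ is weakly connected to $h$: there is a sequence $g=g_0,\dots,g_n=h$ with, for each $i$, $(g_{i-1},g_i)$ or $(g_i,g_{i-1})$ an arc. *)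

theory Defs
  imports "HOL-Algebra.Group"
begin

definition twoS_arc :: "('a, 'b) monoid_scheme \<Rightarrow> 'a set \<Rightarrow> 'a set \<Rightarrow> 'a \<Rightarrow> 'a \<Rightarrow> bool" where
  "twoS_arc G L R g h \<longleftrightarrow> g \<in> carrier G \<and> h \<in> carrier G \<and>
     (\<exists>l\<in>L. \<exists>r\<in>R. h = inv\<^bsub>G\<^esub> l \<otimes>\<^bsub>G\<^esub> g \<otimes>\<^bsub>G\<^esub> r)"

definition weakly_conn :: "('a, 'b) monoid_scheme \<Rightarrow> 'a set \<Rightarrow> 'a set \<Rightarrow> 'a \<Rightarrow> 'a \<Rightarrow> bool" where
  "weakly_conn G L R g h \<longleftrightarrow>
     (g, h) \<in> ({(x, y). twoS_arc G L R x y} \<union> {(x, y). twoS_arc G L R y x})\<^sup>*"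

definition word_val :: "('a, 'b) monoid_scheme \<Rightarrow> (bool \<times> 'a) list \<Rightarrow> 'a" where
  "word_val G ws = foldr (\<lambda>(b, x) acc. (if b then x else inv\<^bsub>G\<^esub> x) \<otimes>\<^bsub>G\<^esub> acc) ws \<one>\<^bsub>G\<^esub>"

text \<open>w is a value w_{S,m,a}: a word with m factors from S and a factors from S^-1.\<close>
definition is_word_val :: "('a, 'b) monoid_scheme \<Rightarrow> 'a set \<Rightarrow> nat \<Rightarrow> nat \<Rightarrow> 'a \<Rightarrow> bool" where
  "is_word_val G S m a w \<longleftrightarrow> (\<exists>ws. set (map snd ws) \<subseteq> S \<and>
     length (filter fst ws) = m \<and> length (filter (\<lambda>p. \<not> fst p) ws) = a \<and>
     w = word_val G ws)"

end

theory Submission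
  imports Defs
begin

text \<open>The arc from \<open>l z\<close> to \<open>l\<inverse> (l z) r = z r\<close> shows \<open>l z \<sim> z r\<close>; the same with inverses
  shows \<open>l\<inverse> z \<sim> z r\<inverse>\<close>. Iterating this swap moves every letter of the left word
  across \<open>s\<close> as a letter \<open>r\<^sup>\<plusminus>\<^sup>1\<close> and every letter of the right word as a letter \<open>l\<^sup>\<plusminus>\<^sup>1\<close>,
  so only the exponent sum \<open>d\<close> survives: \<open>g \<sim> s r\<^sup>d \<sim> l\<^sup>d s\<close>.\<close>

lemma weakly_conn_refl: "weakly_conn G L R x x"
  by (simp add: weakly_conn_def)

lemma weakly_conn_sym: "weakly_conn G L R x y \<Longrightarrow> weakly_conn G L R y x"
  unfolding weakly_conn_def by (rule symD[OF sym_rtrancl]) (auto simp: sym_def)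

lemma weakly_conn_trans [trans]:
  "weakly_conn G L R x y \<Longrightarrow> weakly_conn G L R y z \<Longrightarrow> weakly_conn G L R x z"
  unfolding weakly_conn_def by (rule rtrancl_trans)

lemma weakly_conn_arc: "twoS_arc G L R x y \<Longrightarrow> weakly_conn G L R x y"
  unfolding weakly_conn_def by blast

definition bool_sign :: "bool \<Rightarrow> int" where
  "bool_sign b = (if b then 1 else -1)"

definition exponent_sum :: "(bool \<times> 'a) list \<Rightarrow> int" where
  "exponent_sum ws = (\<Sum>p\<leftarrow>ws. bool_sign (fst p))"

lemma exponent_sum_Cons [simp]: "exponent_sum ((b, x) # ws) = bool_sign b + exponent_sum ws"
  by (simp add: exponent_sum_def)

lemma exponent_sum_eq_count:
  "exponent_sum ws = int (length (filter fst ws)) - int (length (filter (\<lambda>p. \<not> fst p) ws))"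
  by (induction ws) (auto simp: exponent_sum_def bool_sign_def)

context
  fixes G (structure) and L R :: "'a set"
  assumes "group G" and L_carrier: "L \<subseteq> carrier G" and R_carrier: "R \<subseteq> carrier G"
begin

interpretation group G by fact

lemma word_val_Cons:
  "x \<in> carrier G \<Longrightarrow> word_val G ((b, x) # ws) = x [^] bool_sign b \<otimes> word_val G ws"
  by (simp add: word_val_def bool_sign_def int_pow_neg)

lemma word_val_closed: "set (map snd ws) \<subseteq> carrier G \<Longrightarrow> word_val G ws \<in> carrier G"
  by (induction ws) (auto simp: word_val_def)

lemma weakly_conn_swap_letter:
  assumes "z \<in> carrier G" "u \<in> L" "v \<in> R"
  shows "weakly_conn G L R (u [^] bool_sign b \<otimes> z) (z \<otimes> v [^] bool_sign b)"
proof -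
  have u: "u \<in> carrier G" and v: "v \<in> carrier G" using assms L_carrier R_carrier by auto
  show ?thesis
  proof (cases b)
    case True
    have "twoS_arc G L R (u \<otimes> z) (inv u \<otimes> (u \<otimes> z) \<otimes> v)"
      using assms u v unfolding twoS_arc_def by auto
    then show ?thesis
      using True u v assms(1) by (simp add: bool_sign_def m_assoc[symmetric] weakly_conn_arc)
  next
    case False
    have "twoS_arc G L R (z \<otimes> inv v) (inv u \<otimes> (z \<otimes> inv v) \<otimes> v)"
      using assms u v unfolding twoS_arc_def by auto
    then show ?thesis
      using False u v assms(1)
      by (simp add: bool_sign_def int_pow_neg m_assoc weakly_conn_arc weakly_conn_sym)
  qed
qed

lemma weakly_conn_swap_int_pow:
  assumes "l \<in> L" "r \<in> R" "z \<in> carrier G"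
  shows "weakly_conn G L R (l [^] (k::int) \<otimes> z) (z \<otimes> r [^] k)"
proof -
  have l: "l \<in> carrier G" and r: "r \<in> carrier G" using assms L_carrier R_carrier by auto
  have step: "weakly_conn G L R (l [^] (bool_sign b + i) \<otimes> z) (z \<otimes> r [^] (bool_sign b + i))"
    if IH: "\<And>z. z \<in> carrier G \<Longrightarrow> weakly_conn G L R (l [^] i \<otimes> z) (z \<otimes> r [^] i)"
      and z: "z \<in> carrier G" for b i z
  proof -
    have "l [^] (bool_sign b + i) \<otimes> z = l [^] bool_sign b \<otimes> (l [^] i \<otimes> z)"
      using l z by (simp add: int_pow_mult m_assoc)
    also have "weakly_conn G L R \<dots> (l [^] i \<otimes> z \<otimes> r [^] bool_sign b)"
      using weakly_conn_swap_letter assms l z by simp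
    also have "l [^] i \<otimes> z \<otimes> r [^] bool_sign b = l [^] i \<otimes> (z \<otimes> r [^] bool_sign b)"
      using l r z by (simp add: m_assoc)
    also have "weakly_conn G L R \<dots> (z \<otimes> r [^] bool_sign b \<otimes> r [^] i)"
      using IH r z by simp
    also have "z \<otimes> r [^] bool_sign b \<otimes> r [^] i = z \<otimes> r [^] (bool_sign b + i)"
      using r z by (simp add: int_pow_mult m_assoc)
    finally show ?thesis .
  qed
  show ?thesis
    using assms(3)
  proof (induction k arbitrary: z rule: int_induct[where k = 0])
    case base
    then show ?case by (simp add: weakly_conn_refl)
  next
    case (step1 i)
    then show ?case using step[of i _ True] by (simp add: bool_sign_def add.commute)
  next
    case (step2 i)
    then show ?case using step[of i _ False] by (simp add: bool_sign_def)
  qed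
qed

lemma weakly_conn_left_word:
  assumes "r \<in> R" and "set (map snd ws) \<subseteq> L" and "x \<in> carrier G"
  shows "weakly_conn G L R (word_val G ws \<otimes> x) (x \<otimes> r [^] exponent_sum ws)"
  using assms(2,3)
proof (induction ws arbitrary: x)
  case Nil
  then show ?case by (simp add: word_val_def exponent_sum_def weakly_conn_refl)
next
  case (Cons p ws)
  obtain b u where p: "p = (b, u)" by fastforce
  have u: "u \<in> L" and ws: "set (map snd ws) \<subseteq> L" using Cons.prems p by auto
  have r: "r \<in> carrier G" using assms(1) R_carrier by auto
  have W: "word_val G ws \<in> carrier G" using ws L_carrier word_val_closed by auto
  have "word_val G (p # ws) \<otimes> x = u [^] bool_sign b \<otimes> (word_val G ws \<otimes> x)"
    using p u L_carrier W Cons.prems by (auto simp: word_val_Cons m_assoc)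
  also have "weakly_conn G L R \<dots> (word_val G ws \<otimes> x \<otimes> r [^] bool_sign b)"
    using weakly_conn_swap_letter assms(1) u W Cons.prems by simp
  also have "word_val G ws \<otimes> x \<otimes> r [^] bool_sign b = word_val G ws \<otimes> (x \<otimes> r [^] bool_sign b)"
    using W r Cons.prems by (simp add: m_assoc)
  also have "weakly_conn G L R \<dots> (x \<otimes> r [^] bool_sign b \<otimes> r [^] exponent_sum ws)"
    using Cons.IH ws r Cons.prems by simp
  also have "x \<otimes> r [^] bool_sign b \<otimes> r [^] exponent_sum ws = x \<otimes> r [^] exponent_sum (p # ws)"
    using p r Cons.prems by (simp add: int_pow_mult m_assoc)
  finally show ?case .
qed

lemma weakly_conn_right_word:
  assumes "l \<in> L" and "set (map snd ws) \<subseteq> R" and "x \<in> carrier G"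
  shows "weakly_conn G L R (x \<otimes> word_val G ws) (l [^] exponent_sum ws \<otimes> x)"
  using assms(2,3)
proof (induction ws arbitrary: x)
  case Nil
  then show ?case by (simp add: word_val_def exponent_sum_def weakly_conn_refl)
next
  case (Cons p ws)
  obtain b v where p: "p = (b, v)" by fastforce
  have v: "v \<in> R" and ws: "set (map snd ws) \<subseteq> R" using Cons.prems p by auto
  have l: "l \<in> carrier G" using assms(1) L_carrier by auto
  have vb: "v [^] bool_sign b \<in> carrier G" using v R_carrier by auto
  have W: "word_val G ws \<in> carrier G" using ws R_carrier word_val_closed by auto
  have "x \<otimes> word_val G (p # ws) = x \<otimes> v [^] bool_sign b \<otimes> word_val G ws"
    using p v R_carrier W vb Cons.prems by (auto simp: word_val_Cons m_assoc)
  also have "weakly_conn G L R \<dots> (l [^] exponent_sum ws \<otimes> (x \<otimes> v [^] bool_sign b))"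
    using Cons.IH ws vb Cons.prems by simp
  also have "l [^] exponent_sum ws \<otimes> (x \<otimes> v [^] bool_sign b)
      = l [^] exponent_sum ws \<otimes> x \<otimes> v [^] bool_sign b"
    using l vb Cons.prems by (simp add: m_assoc)
  also have "weakly_conn G L R \<dots> (l [^] bool_sign b \<otimes> (l [^] exponent_sum ws \<otimes> x))"
    using weakly_conn_swap_letter assms(1) v l Cons.prems by (simp add: weakly_conn_sym)
  also have "l [^] bool_sign b \<otimes> (l [^] exponent_sum ws \<otimes> x) = l [^] exponent_sum (p # ws) \<otimes> x"
    using p l Cons.prems by (simp add: int_pow_mult m_assoc)
  finally show ?case .
qed

lemma weakly_conn_two_sided_word:
  assumes "s \<in> carrier G" "l \<in> L" "r \<in> R"
    and wsl: "set (map snd wsl) \<subseteq> L" and wsr: "set (map snd wsr) \<subseteq> R"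
  defines "d \<equiv> exponent_sum wsl + exponent_sum wsr"
  shows "weakly_conn G L R (word_val G wsl \<otimes> s \<otimes> word_val G wsr) (s \<otimes> r [^] d)"
    and "weakly_conn G L R (word_val G wsl \<otimes> s \<otimes> word_val G wsr) (l [^] d \<otimes> s)"
proof -
  have r: "r \<in> carrier G" using assms(3) R_carrier by auto
  have Wl: "word_val G wsl \<in> carrier G" using wsl L_carrier word_val_closed by auto
  let ?x = "word_val G wsl \<otimes> s"
  have x: "?x \<in> carrier G" using Wl assms(1) by simp
  have "weakly_conn G L R (?x \<otimes> word_val G wsr) (l [^] exponent_sum wsr \<otimes> ?x)"
    using weakly_conn_right_word assms x by simp
  also have "weakly_conn G L R \<dots> (?x \<otimes> r [^] exponent_sum wsr)"
    using weakly_conn_swap_int_pow assms x by simp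
  also have "?x \<otimes> r [^] exponent_sum wsr = word_val G wsl \<otimes> (s \<otimes> r [^] exponent_sum wsr)"
    using Wl r assms(1) by (simp add: m_assoc)
  also have "weakly_conn G L R \<dots> (s \<otimes> r [^] exponent_sum wsr \<otimes> r [^] exponent_sum wsl)"
    using weakly_conn_left_word assms r by simp
  also have "s \<otimes> r [^] exponent_sum wsr \<otimes> r [^] exponent_sum wsl = s \<otimes> r [^] d"
    using r assms(1) by (simp add: d_def m_assoc add.commute flip: int_pow_mult)
  finally show right: "weakly_conn G L R (?x \<otimes> word_val G wsr) (s \<otimes> r [^] d)" .
  have "weakly_conn G L R (s \<otimes> r [^] d) (l [^] d \<otimes> s)"
    using weakly_conn_swap_int_pow assms by (simp add: weakly_conn_sym)
  with right show "weakly_conn G L R (?x \<otimes> word_val G wsr) (l [^] d \<otimes> s)"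
    by (rule weakly_conn_trans)
qed

end

theorem mainTheorem14:
  fixes G :: "('a, 'b) monoid_scheme"
    and L R :: "'a set" and s g wl wr :: 'a and m a n b :: nat
  assumes "group G"
    and "L \<subseteq> carrier G" and "L \<noteq> {}"
    and "R \<subseteq> carrier G" and "R \<noteq> {}"
    and "s \<in> carrier G"
    and "is_word_val G L m a wl"
    and "is_word_val G R n b wr"
    and "g = wl \<otimes>\<^bsub>G\<^esub> s \<otimes>\<^bsub>G\<^esub> wr"
  shows "\<forall>l\<in>L. \<forall>r\<in>R.
           weakly_conn G L R g (l [^]\<^bsub>G\<^esub> (int (m + n) - int (a + b)) \<otimes>\<^bsub>G\<^esub> s) \<and>
           weakly_conn G L R g (s \<otimes>\<^bsub>G\<^esub> r [^]\<^bsub>G\<^esub> (int (m + n) - int (a + b)))"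
proof (intro ballI conjI)
  fix l r assume l: "l \<in> L" and r: "r \<in> R"
  obtain wsl where wsl: "set (map snd wsl) \<subseteq> L" "length (filter fst wsl) = m"
    "length (filter (\<lambda>p. \<not> fst p) wsl) = a" "wl = word_val G wsl"
    using assms(7) unfolding is_word_val_def by blast
  obtain wsr where wsr: "set (map snd wsr) \<subseteq> R" "length (filter fst wsr) = n"
    "length (filter (\<lambda>p. \<not> fst p) wsr) = b" "wr = word_val G wsr"
    using assms(8) unfolding is_word_val_def by blast
  have d: "int (m + n) - int (a + b) = exponent_sum wsl + exponent_sum wsr"
    using wsl wsr by (simp add: exponent_sum_eq_count)
  note conn = weakly_conn_two_sided_word[OF assms(1,2,4,6) l r wsl(1) wsr(1)]
  show "weakly_conn G L R g (l [^]\<^bsub>G\<^esub> (int (m + n) - int (a + b)) \<otimes>\<^bsub>G\<^esub> s)"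
    using conn(2) unfolding d assms(9) wsl(4) wsr(4) .
  show "weakly_conn G L R g (s \<otimes>\<^bsub>G\<^esub> r [^]\<^bsub>G\<^esub> (int (m + n) - int (a + b)))"
    using conn(1) unfolding d assms(9) wsl(4) wsr(4) .
qed

end
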